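(* Let $G\in\mathcal{P}_*(\Theta)$. For any bounded continuous functions $f_1,\ldots,f_m$ on $\Theta$ and any $\varepsilon_1,\ldots,\varepsilon_m>0$ there exists $n\in\mathbb{N}$ such that the measure $G^{(n)}=\sum_{l=1}^{2^n}G(\Theta_{n,l})\delta_{\mu_{n+1,2l-1}}$ satisfies $\left|\int_\Theta f_i\,d(G^{(n)}-G)\right|<\varepsilon_i$ for all $i=1,\ldots,m$.
   Context: $\Theta\subseteq\mathbb{R}$ is $\mathbb{R}$, a closed half-line, or a compact interval with nonempty interior. $\mathcal{P}_*(\Theta)$ is the set of Borel probability measures on $\Theta$ whose support is a non-degenerate compact interval. $G$ is identified with its distribution function; $b_G(a_1,a_2]=\int_{(a_1,a_2]}\theta\,dG/(G(a_2)-G(a_1))$ if $G(a_2)>G(a_1)$, else $a_1$. SBA: $\mu_{1,1}=\int\theta\,dG$; for $j\ge2$, $\mu_{j,2l}=\mu_{j-1,l}$, $\mu_{j,2l-1}=b_G(\mu_{j-1,l-1},\mu_{j-1,l}]$, with $\mu_{j,0}=\inf\Theta$, $\mu_{j,2^j}=\sup\Theta$. $\Theta_{n,1}=[\mu_{n,0},\mu_{n,1}]$ if $\mu_{n,0}>-\infty$, else $(\mu_{n,0},\mu_{n,1}]$; $\Theta_{n,l}=(\mu_{n,l-1},\mu_{n,l}]$ for $2\le l\le 2^n-1$; $\Theta_{n,2^n}=(\mu_{n,2^n-1},\mu_{n,2^n}]$ if $\mu_{n,2^n}<\infty$, else $(\mu_{n,2^n-1},\infty)$. *)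

theory Defs
  imports "HOL-Probability.Probability"
begin

definition admissible_Theta :: "real set \<Rightarrow> bool" where
  "admissible_Theta T \<longleftrightarrow> T = UNIV \<or> (\<exists>a. T = {a..} \<or> T = {..a}) \<or> (\<exists>a b. a < b \<and> T = {a..b})"

definition real_support :: "real measure \<Rightarrow> real set" where
  "real_support M = {x. \<forall>e>0. emeasure M (ball x e) > 0}"

text \<open>G is in P_*(Theta): Borel probability measure on Theta (realised as a probability
measure on the Borel sets of the real line concentrated on Theta) whose support is a
non-degenerate compact interval.\<close>
definition P_star :: "real set \<Rightarrow> real measure \<Rightarrow> bool" where
  "P_star T G \<longleftrightarrow> sets G = sets borel \<and> prob_space G \<and> emeasure G (UNIV - T) = 0
     \<and> (\<exists>a b. a < b \<and> real_support G = {a..b})"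

definition hoi :: "ereal \<Rightarrow> ereal \<Rightarrow> real set" where
  "hoi a1 a2 = {x. a1 < ereal x \<and> ereal x \<le> a2}"

text \<open>b_G(a1,a2]: note G(a2) - G(a1) = G((a1,a2]).\<close>
definition bG :: "real measure \<Rightarrow> ereal \<Rightarrow> ereal \<Rightarrow> ereal" where
  "bG G a1 a2 = (if measure G (hoi a1 a2) > 0
      then ereal ((LINT x:hoi a1 a2|G. x) / measure G (hoi a1 a2)) else a1)"

definition infT :: "real set \<Rightarrow> ereal" where "infT T = Inf (ereal ` T)"
definition supT :: "real set \<Rightarrow> ereal" where "supT T = Sup (ereal ` T)"

text \<open>SBA points mu_{j,l} for j >= 1 and 0 <= l <= 2^j (other values are junk).\<close>
primrec sba :: "real measure \<Rightarrow> real set \<Rightarrow> nat \<Rightarrow> nat \<Rightarrow> ereal" where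
  "sba G T 0 l = 0"
| "sba G T (Suc j) l =
     (if j = 0 then
        (if l = 0 then infT T else if l = 1 then ereal (integral\<^sup>L G (\<lambda>x. x)) else supT T)
      else if l = 0 then infT T
      else if 2 ^ Suc j \<le> l then supT T
      else if even l then sba G T j (l div 2)
      else bG G (sba G T j (l div 2)) (sba G T j (l div 2 + 1)))"

definition cell :: "real measure \<Rightarrow> real set \<Rightarrow> nat \<Rightarrow> nat \<Rightarrow> real set" where
  "cell G T n l = (if l = 1
      then {x. sba G T n 0 \<le> ereal x \<and> ereal x \<le> sba G T n 1}
      else hoi (sba G T n (l - 1)) (sba G T n l))"

definition int_Gn :: "real measure \<Rightarrow> real set \<Rightarrow> nat \<Rightarrow> (real \<Rightarrow> real) \<Rightarrow> real" where
  "int_Gn G T n f = (\<Sum>l=1..2^n. measure G (cell G T n l) * f (real_of_ereal (sba G T (Suc n) (2*l - 1))))"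

end

theory Submission
  imports Defs
begin

text \<open>
  Let the support of G be [a, b]. Then G lives on [a, b] and charges every open subinterval, so
  the conditional mean of G on an interval [p, q] of positive mass lies strictly inside (p, q).
  By induction on n, the SBA points of level n are therefore real and strictly increasing in
  [a, b], and the intervals they bound are the cells of G^(n). Moreover the mesh tends to 0:
  intervals of length 2h inside [a, b] have G-mass at least some eta > 0, so the conditional
  mean of a cell of width at least 4h is at distance at least 2h eta from both ends, and every
  cell of level n has width below 4h or at most (b - a) - (n - 1) 2h eta. Since each atom of
  G^(n) lies in its cell, the integral of f against G^(n) is that of a step function within
  epsilon of f on [a, b] once the mesh is below the modulus of uniform continuity of f there.
  Hence the integrals converge for every bounded continuous f, and finitely many f_i are
  handled simultaneously.
\<close>

lemma real_support_compl_null: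
  assumes sets_M: "sets M = sets borel"
  shows "- real_support M \<in> null_sets M"
proof -
  define \<B> where "\<B> = {B :: real set. open B \<and> emeasure M B = 0}"
  obtain \<B>' where \<B>': "\<B>' \<subseteq> \<B>" "countable \<B>'" "\<Union>\<B>' = \<Union>\<B>"
    using Lindelof[of \<B>] by (auto simp: \<B>_def)
  have "B \<in> null_sets M" if "B \<in> \<B>'" for B
    using that \<B>'(1) sets_M by (auto simp: \<B>_def null_sets_def)
  then have "\<Union>\<B> \<in> null_sets M"
    using \<B>'(2,3) null_sets_UN'[of \<B>' "\<lambda>B. B" M] by simp
  moreover have "- real_support M = \<Union>\<B>"
  proof (intro equalityI subsetI)
    fix x assume "x \<in> - real_support M"
    then obtain e where "e > 0" "emeasure M (ball x e) = 0"
      by (auto simp: real_support_def)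
    then show "x \<in> \<Union>\<B>" by (auto simp: \<B>_def intro!: UnionI[of "ball x e"])
  next
    fix x assume "x \<in> \<Union>\<B>"
    then obtain B where B: "x \<in> B" "open B" "emeasure M B = 0" by (auto simp: \<B>_def)
    then obtain e where "e > 0" "ball x e \<subseteq> B" by (meson open_contains_ball)
    then have "emeasure M (ball x e) = 0"
      using B sets_M emeasure_mono[of "ball x e" B M] by simp
    then show "x \<in> - real_support M" using \<open>e > 0\<close> by (auto simp: real_support_def)
  qed
  ultimately show ?thesis by simp
qed

lemma real_support_subset_closed:
  assumes "sets M = sets borel" "closed T" "emeasure M (- T) = 0"
  shows "real_support M \<subseteq> T"
proof
  fix x assume x: "x \<in> real_support M"
  show "x \<in> T"
  proof (rule ccontr)
    assume "x \<notin> T"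
    then obtain e where "e > 0" "ball x e \<subseteq> - T"
      using assms(2) by (meson ComplI open_Compl open_contains_ball)
    then have "emeasure M (ball x e) = 0"
      using assms emeasure_mono[of "ball x e" "- T" M] by simp
    with x \<open>e > 0\<close> show False by (auto simp: real_support_def)
  qed
qed

lemma emeasure_greaterThanLessThan_pos:
  assumes "x < y" "(x + y) / 2 \<in> real_support M"
  shows "emeasure M {x<..<y} > 0"
  using assms greaterThanLessThan_eq_ball[of x y]
  by (auto simp: real_support_def)

lemma admissible_Theta_closed: "admissible_Theta T \<Longrightarrow> closed T"
  by (auto simp: admissible_Theta_def)

lemma (in finite_measure) measure_mult_le_set_integral:
  fixes \<phi> :: "'a \<Rightarrow> real"
  assumes "set_integrable M S \<phi>" "U \<in> sets M" "U \<subseteq> S"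
    and "\<And>x. x \<in> U \<Longrightarrow> d \<le> \<phi> x" and "AE x \<in> S in M. 0 \<le> \<phi> x"
  shows "d * measure M U \<le> (LINT x:S|M. \<phi> x)"
proof -
  have restrict: "(\<lambda>x. indicator S x * (d * indicator U x)) = (\<lambda>x. d * indicator U x :: real)"
    using assms(3) by (auto simp: indicator_def fun_eq_iff)
  have "d * measure M U = (LINT x:S|M. d * indicator U x)"
    unfolding set_lebesgue_integral_def real_scaleR_def restrict using assms(2) by simp
  also have "\<dots> \<le> (LINT x:S|M. \<phi> x)"
  proof (rule set_integral_mono_AE[OF _ assms(1)])
    show "set_integrable M S (\<lambda>x. d * indicator U x)"
      unfolding set_integrable_def real_scaleR_def restrict using assms(2) by (simp add: less_top[symmetric])
    show "AE x \<in> S in M. d * indicator U x \<le> \<phi> x"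
      using assms(5) by eventually_elim (auto simp: assms(4) indicator_def)
  qed
  finally show ?thesis .
qed

lemma (in prob_space) abs_integral_diff_le:
  fixes u v :: "'a \<Rightarrow> real"
  assumes "integrable M u" "integrable M v" "AE x in M. \<bar>u x - v x\<bar> \<le> \<epsilon>"
  shows "\<bar>integral\<^sup>L M u - integral\<^sup>L M v\<bar> \<le> \<epsilon>"
proof -
  have "\<bar>integral\<^sup>L M u - integral\<^sup>L M v\<bar> = \<bar>\<integral>x. u x - v x \<partial>M\<bar>"
    using assms(1,2) by simp
  also have "\<dots> \<le> (\<integral>x. \<bar>u x - v x\<bar> \<partial>M)"
    by (rule integral_abs_bound)
  also have "\<dots> \<le> (\<integral>x. \<epsilon> \<partial>M)"
    using assms by (intro integral_mono_AE) auto
  finally show ?thesis by (simp add: prob_space)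
qed

locale interval_supported_prob = prob_space G for G :: "real measure" +
  fixes a b :: real
  assumes sets_G: "sets G = sets borel"
    and a_less_b: "a < b"
    and support: "real_support G = {a..b}"
begin

lemma space_G [simp]: "space G = UNIV"
  using sets_eq_imp_space_eq[OF sets_G] by simp

lemma sets_G_borel [measurable]: "S \<in> sets borel \<Longrightarrow> S \<in> sets G"
  using sets_G by simp

lemma borel_measurable_G_iff: "f \<in> borel_measurable G \<longleftrightarrow> f \<in> borel_measurable borel"
  by (simp add: measurable_cong_sets[OF sets_G refl])

lemma AE_in_support: "AE x in G. x \<in> {a..b}"
  using real_support_compl_null[OF sets_G] support by (auto intro: AE_I')

lemma measure_greaterThanLessThan_pos:
  assumes "a \<le> x" "x < y" "y \<le> b"
  shows "0 < measure G {x<..<y}"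
  using emeasure_greaterThanLessThan_pos[of x y G] assms support
  by (simp add: emeasure_eq_measure)

lemma integrable_bounded_on_support:
  fixes f :: "real \<Rightarrow> real"
  assumes "f \<in> borel_measurable borel" "\<And>x. x \<in> {a..b} \<Longrightarrow> \<bar>f x\<bar> \<le> B"
  shows "integrable G f"
proof (rule integrable_const_bound)
  show "AE x in G. norm (f x) \<le> B"
    using AE_in_support by eventually_elim (simp add: assms(2))
qed (simp add: assms(1) borel_measurable_G_iff)

lemma integrable_id: "integrable G (\<lambda>x. x)"
  by (rule integrable_bounded_on_support[where B = "\<bar>a\<bar> + \<bar>b\<bar>"]) auto

definition cond_mean :: "real set \<Rightarrow> real" where
  "cond_mean S = (LINT x:S|G. x) / measure G S"

lemma cond_mean_gaps:
  assumes S: "S \<in> sets borel" "{p<..<q} \<subseteq> S" "S \<inter> {a..b} \<subseteq> {p..q}"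
    and pq: "a \<le> p" "p < q" "q \<le> b"
  shows "0 < measure G S"
    and "0 \<le> d \<Longrightarrow> d * measure G {p + d<..<q} \<le> cond_mean S - p"
    and "0 \<le> d \<Longrightarrow> d * measure G {p<..<q - d} \<le> q - cond_mean S"
proof -
  show pos: "0 < measure G S"
    using measure_greaterThanLessThan_pos[OF pq] finite_measure_mono[OF S(2)] S(1) by simp
  have AE_S: "AE x \<in> S in G. p \<le> x \<and> x \<le> q"
    using AE_in_support by eventually_elim (use S(3) in auto)
  have int_S: "set_integrable G S (\<lambda>x. x)" "set_integrable G S (\<lambda>x. c)" for c :: real
    using integrable_mult_indicator[OF sets_G_borel[OF S(1)] integrable_id] S(1)
    by (simp_all add: set_integrable_def less_top[symmetric])
  have int_S_const: "(LINT x:S|G. c) = c * measure G S" for c :: real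
    using S(1) by (simp add: set_integral_const emeasure_eq_measure)
  have gap: "d * measure G U \<le> (LINT x:S|G. \<phi> x) / measure G S"
    if \<phi>: "set_integrable G S \<phi>" "AE x \<in> S in G. 0 \<le> \<phi> x"
      and U: "U \<in> sets borel" "U \<subseteq> S" "\<And>x. x \<in> U \<Longrightarrow> d \<le> \<phi> x" for \<phi> U
  proof -
    have "0 \<le> (LINT x:S|G. \<phi> x)"
      unfolding set_lebesgue_integral_def using \<phi>(2)
      by (intro integral_nonneg_AE) (auto simp: indicator_def elim!: eventually_mono)
    then have "(LINT x:S|G. \<phi> x) \<le> (LINT x:S|G. \<phi> x) / measure G S"
      using pos prob_le_1 by (simp add: le_divide_eq mult_left_le)
    with measure_mult_le_set_integral[OF \<phi>(1) _ U(2,3) \<phi>(2)] U(1) show ?thesis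
      by simp
  qed
  show "d * measure G {p + d<..<q} \<le> cond_mean S - p" if "0 \<le> d"
  proof -
    have "d * measure G {p + d<..<q} \<le> (LINT x:S|G. x - p) / measure G S"
      using int_S AE_S S(2) that by (intro gap) auto
    also have "\<dots> = cond_mean S - p"
      using pos int_S by (simp add: cond_mean_def int_S_const field_simps)
    finally show ?thesis .
  qed
  show "d * measure G {p<..<q - d} \<le> q - cond_mean S" if "0 \<le> d"
  proof -
    have "d * measure G {p<..<q - d} \<le> (LINT x:S|G. q - x) / measure G S"
      using int_S AE_S S(2) that by (intro gap) auto
    also have "\<dots> = q - cond_mean S"
      using pos int_S by (simp add: cond_mean_def int_S_const field_simps)
    finally show ?thesis .
  qed
qed

lemma cond_mean_between:
  assumes "S \<in> sets borel" "{p<..<q} \<subseteq> S" "S \<inter> {a..b} \<subseteq> {p..q}"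
    and "a \<le> p" "p < q" "q \<le> b"
  shows "p < cond_mean S" "cond_mean S < q"
proof -
  define h where "h = (q - p) / 2"
  have h: "0 < h" "p + h < q" "p < q - h" using assms(5) by (auto simp: h_def field_simps)
  have "0 < h * measure G {p + h<..<q}"
    using h assms(4,6) by (simp add: measure_greaterThanLessThan_pos)
  also have "\<dots> \<le> cond_mean S - p"
    using cond_mean_gaps(2)[OF assms] h by simp
  finally show "p < cond_mean S" by simp
  have "0 < h * measure G {p<..<q - h}"
    using h assms(4,6) by (simp add: measure_greaterThanLessThan_pos)
  also have "\<dots> \<le> q - cond_mean S"
    using cond_mean_gaps(3)[OF assms] h by simp
  finally show "cond_mean S < q" by simp
qed

text \<open>Every interval of length 2h in [a, b] contains one of the finitely many intervals
  (a + i h, a + (i + 1) h) inside [a, b].\<close>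

lemma uniform_interval_mass_pos:
  assumes h: "0 < h"
  obtains \<eta> where "0 < \<eta>"
    and "\<And>s t. a \<le> s \<Longrightarrow> t \<le> b \<Longrightarrow> s + 2 * h \<le> t \<Longrightarrow> \<eta> \<le> measure G {s<..<t}"
proof -
  define K where "K = nat \<lfloor>(b - a) / h\<rfloor>"
  define strip_mass where "strip_mass i = measure G {a + real i * h<..<a + real (Suc i) * h}" for i
  define \<eta> where "\<eta> = Min (insert 1 (strip_mass ` {..<K}))"
  have "0 < strip_mass i" if "i < K" for i
  proof -
    have "real (Suc i) \<le> (b - a) / h" using that by (simp add: K_def) linarith
    then have "a + real (Suc i) * h \<le> b" using h by (simp add: le_divide_eq)
    then show ?thesis
      unfolding strip_mass_def using h by (intro measure_greaterThanLessThan_pos) auto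
  qed
  then have "0 < \<eta>" by (simp add: \<eta>_def)
  moreover have "\<eta> \<le> measure G {s<..<t}" if st: "a \<le> s" "t \<le> b" "s + 2 * h \<le> t" for s t
  proof -
    define i where "i = nat \<lceil>(s - a) / h\<rceil>"
    have "(s - a) / h \<le> real i" "real i < (s - a) / h + 1"
      using st h by (simp_all add: i_def) linarith+
    then have lo: "s \<le> a + real i * h" and up: "real i * h < s - a + h"
      using h by (simp_all add: divide_le_eq field_simps)
    then have "real (Suc i) < (b - a) / h" using st h by (simp add: less_divide_eq algebra_simps)
    then have "i < K" unfolding K_def by linarith
    then have "\<eta> \<le> strip_mass i" unfolding \<eta>_def by (intro Min_le) auto
    also have "strip_mass i \<le> measure G {s<..<t}"
      unfolding strip_mass_def using lo up st by (intro finite_measure_mono) (auto simp: algebra_simps)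
    finally show ?thesis .
  qed
  ultimately show ?thesis using that by blast
qed

end

lemma sba_0: "1 \<le> n \<Longrightarrow> sba G T n 0 = infT T"
  by (cases n) auto

lemma sba_top: "1 \<le> n \<Longrightarrow> 2 ^ n \<le> l \<Longrightarrow> sba G T n l = supT T"
  by (cases n) (auto simp: Suc_le_eq)

lemma sba_Suc_even: "1 \<le> n \<Longrightarrow> 0 < k \<Longrightarrow> k < 2 ^ n \<Longrightarrow> sba G T (Suc n) (2 * k) = sba G T n k"
  by auto

lemma sba_Suc_odd:
  "1 \<le> n \<Longrightarrow> k < 2 ^ n \<Longrightarrow> sba G T (Suc n) (2 * k + 1) = bG G (sba G T n k) (sba G T n (Suc k))"
  by auto

locale sba_setting = interval_supported_prob +
  fixes T :: "real set"
  assumes closed_T: "closed T"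
    and support_subset: "{a..b} \<subseteq> T"
begin

lemma infT_le: "infT T \<le> ereal a"
  using support_subset a_less_b unfolding infT_def by (intro Inf_lower imageI) auto

lemma supT_ge: "ereal b \<le> supT T"
  using support_subset a_less_b unfolding supT_def by (intro Sup_upper imageI) auto

text \<open>The SBA points as reals: the possibly infinite end points inf T and sup T are replaced
  by the ends a and b of the support, as are the junk values beyond index 2^n.\<close>

definition grid :: "nat \<Rightarrow> nat \<Rightarrow> real" where
  "grid n l = (if l = 0 then a else if 2 ^ n \<le> l then b else real_of_ereal (sba G T n l))"

definition sba_interval :: "nat \<Rightarrow> nat \<Rightarrow> real set" where
  "sba_interval n k = hoi (sba G T n k) (sba G T n (Suc k))"

text \<open>The induction invariant over the SBA levels: strict monotonicity of level n gives its
  intervals positive mass, which makes bG a conditional mean at level n + 1.\<close>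

definition grid_regular :: "nat \<Rightarrow> bool" where
  "grid_regular n \<longleftrightarrow> (\<forall>l. 0 < l \<and> l < 2 ^ n \<longrightarrow> sba G T n l = ereal (grid n l))
     \<and> (\<forall>l < 2 ^ n. grid n l < grid n (Suc l)) \<and> (\<forall>l. grid n l \<in> {a..b})"

lemma sba_le_grid:
  assumes reg: "grid_regular n" and n: "1 \<le> n" and k: "k < 2 ^ n"
  shows "sba G T n k \<le> ereal (grid n k)"
proof (cases "k = 0")
  case True
  then show ?thesis using sba_0[OF n] infT_le by (simp add: grid_def)
next
  case False
  then show ?thesis using reg k by (simp add: grid_regular_def)
qed

lemma grid_le_sba:
  assumes reg: "grid_regular n" and n: "1 \<le> n" and k: "0 < k" "k \<le> 2 ^ n"
  shows "ereal (grid n k) \<le> sba G T n k"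
proof (cases "k = 2 ^ n")
  case True
  then show ?thesis using sba_top[OF n] supT_ge by (simp add: grid_def)
next
  case False
  then show ?thesis using reg k by (simp add: grid_regular_def)
qed

lemma sba_interval_sandwich:
  assumes reg: "grid_regular n" and n: "1 \<le> n" and k: "k < 2 ^ n"
  shows "sba_interval n k \<in> sets borel"
    and "{grid n k<..<grid n (Suc k)} \<subseteq> sba_interval n k"
    and "sba_interval n k \<inter> {a..b} \<subseteq> {grid n k..grid n (Suc k)}"
proof -
  show "sba_interval n k \<in> sets borel"
    unfolding sba_interval_def hoi_def by measurable
  note lower = sba_le_grid[OF reg n k]
  have upper: "ereal (grid n (Suc k)) \<le> sba G T n (Suc k)" using k by (intro grid_le_sba[OF reg n]) auto
  show "{grid n k<..<grid n (Suc k)} \<subseteq> sba_interval n k"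
  proof
    fix x assume "x \<in> {grid n k<..<grid n (Suc k)}"
    then have x: "ereal (grid n k) < ereal x" "ereal x \<le> ereal (grid n (Suc k))" by auto
    have "sba G T n k < ereal x" using lower x(1) by (rule order.strict_trans1)
    moreover have "ereal x \<le> sba G T n (Suc k)" using x(2) upper by (rule order.trans)
    ultimately show "x \<in> sba_interval n k" by (simp add: sba_interval_def hoi_def)
  qed
  have "grid n k \<le> x" if "x \<in> {a..b}" "sba G T n k < ereal x" for x
  proof (cases "k = 0")
    case True
    then show ?thesis using that by (simp add: grid_def)
  next
    case False
    then show ?thesis using reg k that by (simp add: grid_regular_def)
  qed
  moreover have "x \<le> grid n (Suc k)" if "x \<in> {a..b}" "ereal x \<le> sba G T n (Suc k)" for x
  proof (cases "Suc k = 2 ^ n")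
    case True
    then show ?thesis using that by (simp add: grid_def)
  next
    case False
    then show ?thesis using reg k that by (simp add: grid_regular_def)
  qed
  ultimately show "sba_interval n k \<inter> {a..b} \<subseteq> {grid n k..grid n (Suc k)}"
    by (auto simp: sba_interval_def hoi_def)
qed

lemma grid_Suc_even_regular:
  assumes reg: "grid_regular n" and n: "1 \<le> n" and k: "k \<le> 2 ^ n"
  shows "grid (Suc n) (2 * k) = grid n k"
proof -
  consider "k = 0" | "k = 2 ^ n" | "0 < k" "k < 2 ^ n" using k by linarith
  then show ?thesis
  proof cases
    case 3
    then show ?thesis using reg sba_Suc_even[OF n 3] by (simp add: grid_def grid_regular_def)
  qed (simp_all add: grid_def)
qed

lemma grid_Suc_odd_regular:
  assumes reg: "grid_regular n" and n: "1 \<le> n" and k: "k < 2 ^ n"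
  shows "sba G T (Suc n) (2 * k + 1) = ereal (cond_mean (sba_interval n k))"
    and "grid (Suc n) (2 * k + 1) = cond_mean (sba_interval n k)"
proof -
  have "0 < measure G (sba_interval n k)"
    using reg k by (intro cond_mean_gaps(1)[OF sba_interval_sandwich[OF reg n k]])
      (auto simp: grid_regular_def)
  then show sba: "sba G T (Suc n) (2 * k + 1) = ereal (cond_mean (sba_interval n k))"
    using sba_Suc_odd[OF n k] by (simp add: bG_def cond_mean_def sba_interval_def)
  have "\<not> 2 ^ Suc n \<le> 2 * k + 1" using k by simp
  then show "grid (Suc n) (2 * k + 1) = cond_mean (sba_interval n k)"
    using sba by (simp add: grid_def)
qed

lemma cond_mean_sba_interval_between:
  assumes "grid_regular n" "1 \<le> n" "k < 2 ^ n"
  shows "grid n k < cond_mean (sba_interval n k)" "cond_mean (sba_interval n k) < grid n (Suc k)"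
  using assms by (auto simp: grid_regular_def intro!: cond_mean_between[OF sba_interval_sandwich[OF assms]])

lemma grid_regular_1: "grid_regular 1"
proof -
  have "UNIV \<in> sets borel" "{a<..<b} \<subseteq> UNIV" "UNIV \<inter> {a..b} \<subseteq> {a..b}" by auto
  from cond_mean_between[OF this order.refl a_less_b order.refl]
  have "a < integral\<^sup>L G (\<lambda>x. x)" "integral\<^sup>L G (\<lambda>x. x) < b"
    by (simp_all add: cond_mean_def set_lebesgue_integral_def prob_space[unfolded space_G])
  moreover have "l = 0 \<or> l = 1 \<or> 2 \<le> l" for l :: nat by auto
  ultimately show ?thesis
    using a_less_b by (auto simp: grid_regular_def grid_def)
qed

lemma grid_Suc_cases_regular:
  assumes reg: "grid_regular n" and n: "1 \<le> n" and l: "l < 2 ^ Suc n"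
  obtains (left) k where "k < 2 ^ n" "l = 2 * k"
      "grid (Suc n) l = grid n k" "grid (Suc n) (Suc l) = cond_mean (sba_interval n k)"
    | (right) k where "k < 2 ^ n" "l = 2 * k + 1"
      "grid (Suc n) l = cond_mean (sba_interval n k)" "grid (Suc n) (Suc l) = grid n (Suc k)"
proof -
  obtain k where "l = 2 * k \<or> l = 2 * k + 1" by (metis oddE evenE)
  then show thesis
  proof
    assume lk: "l = 2 * k"
    then have k: "k < 2 ^ n" using l by simp
    show thesis
      using left[OF k lk] lk grid_Suc_even_regular[OF reg n] grid_Suc_odd_regular(2)[OF reg n k] k
      by simp
  next
    assume lk: "l = 2 * k + 1"
    then have k: "k < 2 ^ n" using l by simp
    show thesis
      using right[OF k lk] lk grid_Suc_even_regular[OF reg n, of "Suc k"] grid_Suc_odd_regular(2)[OF reg n k] k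
      by simp
  qed
qed

lemma grid_regular_Suc:
  assumes reg: "grid_regular n" and n: "1 \<le> n"
  shows "grid_regular (Suc n)"
proof -
  note between = cond_mean_sba_interval_between[OF reg n]
  have "sba G T (Suc n) l = ereal (grid (Suc n) l)" if l: "0 < l" "l < 2 ^ Suc n" for l
  proof (cases rule: grid_Suc_cases_regular[OF reg n l(2), case_names left right])
    case (left k)
    then have "0 < k" using l by simp
    then show ?thesis using left reg sba_Suc_even[OF n] by (simp add: grid_regular_def)
  next
    case (right k)
    then show ?thesis using grid_Suc_odd_regular(1)[OF reg n] by simp
  qed
  moreover have "grid (Suc n) l < grid (Suc n) (Suc l)" if "l < 2 ^ Suc n" for l
    by (cases rule: grid_Suc_cases_regular[OF reg n that]) (use between in simp_all)
  moreover have "grid (Suc n) l \<in> {a..b}" for l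
  proof (cases "l < 2 ^ Suc n")
    case True
    have bounds: "a \<le> grid n k" "grid n k \<le> b" for k using reg by (simp_all add: grid_regular_def)
    show ?thesis
    proof (cases rule: grid_Suc_cases_regular[OF reg n True, case_names left right])
      case (left k)
      then show ?thesis using bounds[of k] by simp
    next
      case (right k)
      then show ?thesis using bounds[of k] bounds[of "Suc k"] between[of k] by simp
    qed
  qed (use a_less_b in \<open>simp add: grid_def\<close>)
  ultimately show ?thesis by (simp add: grid_regular_def)
qed

lemma grid_regular: "1 \<le> n \<Longrightarrow> grid_regular n"
  by (induction n rule: dec_induct) (use grid_regular_1 grid_regular_Suc in auto)

lemma
  assumes "1 \<le> n"
  shows sba_eq_grid: "0 < l \<Longrightarrow> l < 2 ^ n \<Longrightarrow> sba G T n l = ereal (grid n l)"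
    and grid_less_Suc: "l < 2 ^ n \<Longrightarrow> grid n l < grid n (Suc l)"
    and grid_in_support: "grid n l \<in> {a..b}"
  using grid_regular[OF assms] by (auto simp: grid_regular_def)

context
  fixes h \<eta> :: real
  assumes h_pos: "0 < h"
    and mass: "\<And>s t. a \<le> s \<Longrightarrow> t \<le> b \<Longrightarrow> s + 2 * h \<le> t \<Longrightarrow> \<eta> \<le> measure G {s<..<t}"
begin

lemma grid_split_shrinks:
  assumes n: "1 \<le> n" and k: "k < 2 ^ n" and wide: "4 * h \<le> grid n (Suc k) - grid n k"
  shows "2 * h * \<eta> \<le> cond_mean (sba_interval n k) - grid n k"
    and "2 * h * \<eta> \<le> grid n (Suc k) - cond_mean (sba_interval n k)"
proof -
  have bounds: "a \<le> grid n k" "grid n k < grid n (Suc k)" "grid n (Suc k) \<le> b"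
    using grid_in_support[OF n] grid_less_Suc[OF n k] by auto
  note gaps = cond_mean_gaps[OF sba_interval_sandwich[OF grid_regular[OF n] n k] bounds]
  have "2 * h * \<eta> \<le> 2 * h * measure G {grid n k + 2 * h<..<grid n (Suc k)}"
    using h_pos bounds wide by (intro mult_left_mono mass) auto
  also have "\<dots> \<le> cond_mean (sba_interval n k) - grid n k"
    using gaps(2) h_pos by simp
  finally show "2 * h * \<eta> \<le> cond_mean (sba_interval n k) - grid n k" .
  have "2 * h * \<eta> \<le> 2 * h * measure G {grid n k<..<grid n (Suc k) - 2 * h}"
    using h_pos bounds wide by (intro mult_left_mono mass) auto
  also have "\<dots> \<le> grid n (Suc k) - cond_mean (sba_interval n k)"
    using gaps(3) h_pos by simp
  finally show "2 * h * \<eta> \<le> grid n (Suc k) - cond_mean (sba_interval n k)" .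
qed

lemma grid_Suc_gap:
  assumes n: "1 \<le> n" and l: "l < 2 ^ Suc n"
  obtains k where "k < 2 ^ n"
    and "grid (Suc n) (Suc l) - grid (Suc n) l < grid n (Suc k) - grid n k"
    and "4 * h \<le> grid n (Suc k) - grid n k \<Longrightarrow>
      grid (Suc n) (Suc l) - grid (Suc n) l \<le> grid n (Suc k) - grid n k - 2 * h * \<eta>"
proof (cases rule: grid_Suc_cases_regular[OF grid_regular[OF n] n l, case_names left right])
  case (left k)
  then show thesis
    using cond_mean_sba_interval_between[OF grid_regular[OF n] n left(1)] grid_split_shrinks(2)[OF n left(1)]
    by (intro that[of k]) auto
next
  case (right k)
  then show thesis
    using cond_mean_sba_interval_between[OF grid_regular[OF n] n right(1)] grid_split_shrinks(1)[OF n right(1)]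
    by (intro that[of k]) auto
qed

lemma grid_gap_bound:
  assumes n: "1 \<le> n" and k: "k < 2 ^ n"
  shows "grid n (Suc k) - grid n k < 4 * h
    \<or> grid n (Suc k) - grid n k \<le> (b - a) - (real n - 1) * (2 * h * \<eta>)"
  using n k
proof (induction n arbitrary: k rule: dec_induct)
  case base
  have "a \<le> grid 1 k" "grid 1 (Suc k) \<le> b" using grid_in_support[of 1] by auto
  then show ?case by simp
next
  case (step n l)
  obtain k where k: "k < 2 ^ n"
    and child: "grid (Suc n) (Suc l) - grid (Suc n) l < grid n (Suc k) - grid n k"
    and shrink: "4 * h \<le> grid n (Suc k) - grid n k \<Longrightarrow>
      grid (Suc n) (Suc l) - grid (Suc n) l \<le> grid n (Suc k) - grid n k - 2 * h * \<eta>"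
    using grid_Suc_gap[OF step.hyps(1) step.prems] by blast
  show ?case
  proof (cases "grid n (Suc k) - grid n k < 4 * h")
    case True
    then show ?thesis using child by simp
  next
    case False
    then have "grid n (Suc k) - grid n k \<le> (b - a) - (real n - 1) * (2 * h * \<eta>)"
      using step.IH[OF k] by simp
    moreover have "(real (Suc n) - 1) * (2 * h * \<eta>) = (real n - 1) * (2 * h * \<eta>) + 2 * h * \<eta>"
      by (simp add: algebra_simps)
    ultimately show ?thesis using shrink False by simp
  qed
qed

end

lemma grid_mesh_eventually_small:
  assumes "0 < \<delta>"
  shows "eventually (\<lambda>n. \<forall>k < 2 ^ n. grid n (Suc k) - grid n k < \<delta>) sequentially"
proof -
  define h where "h = \<delta> / 4"
  have h: "0 < h" using assms by (simp add: h_def)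
  obtain \<eta> where \<eta>: "0 < \<eta>"
    and mass: "\<And>s t. a \<le> s \<Longrightarrow> t \<le> b \<Longrightarrow> s + 2 * h \<le> t \<Longrightarrow> \<eta> \<le> measure G {s<..<t}"
    using uniform_interval_mass_pos[OF h] by blast
  define \<kappa> where "\<kappa> = 2 * h * \<eta>"
  have \<kappa>: "0 < \<kappa>" using h \<eta> by (simp add: \<kappa>_def)
  have "\<forall>k < 2 ^ n. grid n (Suc k) - grid n k < \<delta>" if n: "nat \<lceil>(b - a) / \<kappa>\<rceil> + 2 \<le> n" for n
  proof (intro allI impI)
    fix k :: nat assume k: "k < 2 ^ n"
    have "(b - a) / \<kappa> < real n - 1" using n by linarith
    then have "(b - a) - (real n - 1) * \<kappa> < 0" using \<kappa> by (simp add: pos_divide_less_eq)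
    moreover have "grid n k < grid n (Suc k)" using n k by (intro grid_less_Suc) auto
    ultimately show "grid n (Suc k) - grid n k < \<delta>"
      using grid_gap_bound[OF h mass _ k] n by (auto simp: h_def \<kappa>_def)
  qed
  then show ?thesis by (rule eventually_sequentiallyI)
qed

lemma grid_mono:
  assumes "1 \<le> n"
  shows "mono (grid n)"
proof (rule mono_iff_le_Suc[THEN iffD2], intro allI)
  fix l
  show "grid n l \<le> grid n (Suc l)"
  proof (cases "l < 2 ^ n")
    case True
    then show ?thesis using grid_less_Suc[OF assms] by (simp add: less_imp_le)
  qed (use a_less_b in \<open>simp add: grid_def\<close>)
qed

lemma cell_iff:
  assumes n: "1 \<le> n" and x: "x \<in> {a..b}" and l: "l \<in> {1..2 ^ n}"
  shows "x \<in> cell G T n l \<longleftrightarrow> (l = 1 \<or> grid n (l - 1) < x) \<and> x \<le> grid n l"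
proof (cases "l = 1")
  case True
  have "sba G T n 0 \<le> ereal x" using sba_0[OF n] infT_le x by (auto intro: order.trans)
  moreover have "sba G T n 1 = ereal (grid n 1)"
    using n one_less_power[of "2::nat" n] by (intro sba_eq_grid) auto
  ultimately show ?thesis using True by (simp add: cell_def)
next
  case False
  then have "sba G T n (l - 1) = ereal (grid n (l - 1))"
    using l by (intro sba_eq_grid[OF n]) auto
  moreover have "ereal x \<le> sba G T n l \<longleftrightarrow> x \<le> grid n l"
  proof (cases "l = 2 ^ n")
    case True
    then show ?thesis
      using x sba_top[OF n] order.trans[OF _ supT_ge] by (simp add: grid_def)
  next
    case False
    then show ?thesis using l by (simp add: sba_eq_grid[OF n])
  qed
  ultimately show ?thesis using False by (simp add: cell_def hoi_def)
qed

lemma cell_cover: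
  assumes n: "1 \<le> n" and x: "x \<in> {a..b}"
  obtains l where "l \<in> {1..2 ^ n}" "x \<in> cell G T n l"
proof -
  define l0 where "l0 = (LEAST l. x \<le> grid n l)"
  have top: "x \<le> grid n (2 ^ n)" using x by (simp add: grid_def)
  have l0: "x \<le> grid n l0" "l0 \<le> 2 ^ n"
    using LeastI[where P = "\<lambda>l. x \<le> grid n l", OF top] Least_le[where P = "\<lambda>l. x \<le> grid n l", OF top]
    by (simp_all add: l0_def)
  have below: "grid n l < x" if "l < l0" for l
    using not_less_Least[OF that[unfolded l0_def]] by simp
  have mem: "max 1 l0 \<in> {1..2 ^ n}" using l0(2) by simp
  have "grid n l0 \<le> grid n (max 1 l0)" using monoD[OF grid_mono[OF n]] by simp
  then have "x \<le> grid n (max 1 l0)" using l0(1) by linarith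
  moreover have "max 1 l0 = 1 \<or> grid n (max 1 l0 - 1) < x" using below by (cases "l0 \<le> 1") auto
  ultimately show thesis
    using that[OF mem] cell_iff[OF n x mem] by simp
qed

lemma cell_disjoint:
  assumes n: "1 \<le> n" and x: "x \<in> {a..b}"
    and l: "l \<in> {1..2 ^ n}" "x \<in> cell G T n l" and l': "l' \<in> {1..2 ^ n}" "x \<in> cell G T n l'"
  shows "l = l'"
proof -
  have False if "i < j" "i \<in> {1..2 ^ n}" "x \<in> cell G T n i" "j \<in> {1..2 ^ n}" "x \<in> cell G T n j"
    for i j
  proof -
    have "grid n i \<le> grid n (j - 1)" using \<open>i < j\<close> monoD[OF grid_mono[OF n]] by simp
    moreover have "x \<le> grid n i" using cell_iff[OF n x that(2)] that(3) by simp
    moreover have "grid n (j - 1) < x" using cell_iff[OF n x that(4)] that(1,2,5) by auto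
    ultimately show False by simp
  qed
  then show ?thesis using l l' by (cases l l' rule: linorder_cases) blast+
qed

lemma cell_bounds:
  assumes n: "1 \<le> n" and x: "x \<in> {a..b}" and l: "l \<in> {1..2 ^ n}" "x \<in> cell G T n l"
  shows "grid n (l - 1) \<le> x" "x \<le> grid n l"
proof -
  have "grid n 0 = a" by (simp add: grid_def)
  then show "grid n (l - 1) \<le> x" "x \<le> grid n l"
    using cell_iff[OF n x l(1)] l(2) x by (auto simp del: One_nat_def)
qed

lemma cell_sets: "cell G T n l \<in> sets borel"
proof -
  have "{x. sba G T n 0 \<le> ereal x \<and> ereal x \<le> sba G T n 1} \<in> sets borel"
    and "hoi (sba G T n (l - 1)) (sba G T n l) \<in> sets borel"
    unfolding hoi_def by measurable
  then show ?thesis by (simp add: cell_def)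
qed

lemma sum_cell_indicator:
  assumes n: "1 \<le> n" and x: "x \<in> {a..b}" and l0: "l0 \<in> {1..2 ^ n}" "x \<in> cell G T n l0"
  shows "(\<Sum>l = 1..2 ^ n. w l * indicator (cell G T n l) x) = (w l0 :: real)"
proof -
  have "(\<Sum>l = 1..2 ^ n. w l * indicator (cell G T n l) x) = (\<Sum>l = 1..2 ^ n. if l = l0 then w l0 else 0)"
  proof (intro sum.cong refl)
    fix l :: nat assume l: "l \<in> {1..2 ^ n}"
    then have "x \<in> cell G T n l \<longleftrightarrow> l = l0" using cell_disjoint[OF n x l _ l0] l0(2) by blast
    then show "w l * indicator (cell G T n l) x = (if l = l0 then w l0 else 0)"
      by (simp add: indicator_def)
  qed
  also have "\<dots> = w l0" using l0(1) by simp
  finally show ?thesis .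
qed

lemma
  fixes w :: "nat \<Rightarrow> real"
  shows integrable_cell_step: "integrable G (\<lambda>x. \<Sum>l = 1..2 ^ n. w l * indicator (cell G T n l) x)"
    and integral_cell_step: "(\<integral>x. (\<Sum>l = 1..2 ^ n. w l * indicator (cell G T n l) x) \<partial>G)
      = (\<Sum>l = 1..2 ^ n. w l * measure G (cell G T n l))"
proof -
  have int: "integrable G (\<lambda>x. w l * indicator (cell G T n l) x)" for l
    using cell_sets by (intro integrable_mult_right integrable_real_indicator) (auto simp: less_top[symmetric])
  then show "integrable G (\<lambda>x. \<Sum>l = 1..2 ^ n. w l * indicator (cell G T n l) x)"
    by (intro Bochner_Integration.integrable_sum)
  show "(\<integral>x. (\<Sum>l = 1..2 ^ n. w l * indicator (cell G T n l) x) \<partial>G)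
      = (\<Sum>l = 1..2 ^ n. w l * measure G (cell G T n l))"
    unfolding Bochner_Integration.integral_sum[OF int]
    by (simp only: integral_mult_right_zero Bochner_Integration.integral_indicator space_G Int_UNIV_right)
qed

lemma sba_atom_in_cell:
  assumes n: "1 \<le> n" and l: "l \<in> {1..2 ^ n}"
  shows "grid n (l - 1) < real_of_ereal (sba G T (Suc n) (2 * l - 1))"
    and "real_of_ereal (sba G T (Suc n) (2 * l - 1)) < grid n l"
proof -
  obtain k where k: "k < 2 ^ n" "l = Suc k" using l by (cases l) auto
  then have "2 * l - 1 = 2 * k + 1" by simp
  then have "sba G T (Suc n) (2 * l - 1) = ereal (cond_mean (sba_interval n k))"
    using grid_Suc_odd_regular(1)[OF grid_regular[OF n] n k(1)] by (simp only:)
  then show "grid n (l - 1) < real_of_ereal (sba G T (Suc n) (2 * l - 1))"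
    and "real_of_ereal (sba G T (Suc n) (2 * l - 1)) < grid n l"
    using cond_mean_sba_interval_between[OF grid_regular[OF n] n k(1)] k(2) by simp_all
qed

lemma integrable_indicator_mult:
  fixes f :: "real \<Rightarrow> real"
  assumes f: "continuous_on T f" "bounded (f ` T)"
  shows "integrable G (\<lambda>x. indicator T x * f x)"
proof -
  obtain B where B: "\<And>y. y \<in> T \<Longrightarrow> \<bar>f y\<bar> \<le> B" using f(2) unfolding bounded_real by blast
  have "(\<lambda>x. indicator T x *\<^sub>R f x) \<in> borel_measurable borel"
    by (rule borel_measurable_continuous_on_indicator[OF borel_closed[OF closed_T] f(1)])
  then have "(\<lambda>x. indicator T x * f x) \<in> borel_measurable borel" by (simp only: real_scaleR_def)
  moreover have "\<bar>indicator T x * f x\<bar> \<le> B" if "x \<in> {a..b}" for x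
  proof -
    have "x \<in> T" using that support_subset by blast
    then show ?thesis by (simp add: B)
  qed
  ultimately show ?thesis by (rule integrable_bounded_on_support)
qed

lemma int_Gn_error_le:
  fixes f :: "real \<Rightarrow> real"
  assumes n: "1 \<le> n" and mesh: "\<forall>k < 2 ^ n. grid n (Suc k) - grid n k < \<delta>"
    and uc: "\<And>x y. x \<in> {a..b} \<Longrightarrow> y \<in> {a..b} \<Longrightarrow> \<bar>x - y\<bar> < \<delta> \<Longrightarrow> \<bar>f x - f y\<bar> \<le> \<epsilon>"
    and f: "continuous_on T f" "bounded (f ` T)"
  shows "\<bar>int_Gn G T n f - (LINT x:T|G. f x)\<bar> \<le> \<epsilon>"
proof -
  define c where "c l = real_of_ereal (sba G T (Suc n) (2 * l - 1))" for l
  define g where "g x = (\<Sum>l = 1..2 ^ n. f (c l) * indicator (cell G T n l) x)" for x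
  have "int_Gn G T n f = integral\<^sup>L G g"
    unfolding g_def integral_cell_step int_Gn_def c_def by (simp add: mult.commute)
  moreover have "(LINT x:T|G. f x) = (\<integral>x. indicator T x * f x \<partial>G)"
    by (simp add: set_lebesgue_integral_def)
  moreover have "AE x in G. \<bar>g x - indicator T x * f x\<bar> \<le> \<epsilon>"
    using AE_in_support
  proof eventually_elim
    case (elim x)
    obtain l where l: "l \<in> {1..2 ^ n}" "x \<in> cell G T n l" using cell_cover[OF n elim] .
    have "l - 1 < 2 ^ n" "Suc (l - 1) = l" using l(1) by (cases l; simp)+
    then have "grid n l - grid n (l - 1) < \<delta>" using mesh by metis
    then have close: "\<bar>c l - x\<bar> < \<delta>"
      using cell_bounds[OF n elim l] sba_atom_in_cell[OF n l(1)] by (simp add: c_def abs_less_iff)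
    have "a \<le> grid n (l - 1)" "grid n l \<le> b" using grid_in_support[OF n] by simp_all
    then have "c l \<in> {a..b}" using sba_atom_in_cell[OF n l(1)] by (simp add: c_def)
    moreover have "g x = f (c l)" unfolding g_def by (rule sum_cell_indicator[OF n elim l])
    moreover have "x \<in> T" using elim support_subset by blast
    ultimately show ?case using uc[OF _ elim close] by simp
  qed
  moreover have "integrable G g" unfolding g_def by (rule integrable_cell_step)
  ultimately show ?thesis
    using abs_integral_diff_le[of g "\<lambda>x. indicator T x * f x"] integrable_indicator_mult[OF f]
    by simp
qed

lemma int_Gn_tendsto:
  fixes f :: "real \<Rightarrow> real"
  assumes f: "continuous_on T f" "bounded (f ` T)"
  shows "(\<lambda>n. int_Gn G T n f) \<longlonglongrightarrow> (LINT x:T|G. f x)"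
proof (rule tendstoI)
  fix e :: real assume e: "0 < e"
  have "uniformly_continuous_on {a..b} f"
    using continuous_on_subset[OF f(1) support_subset] by (intro compact_uniformly_continuous) auto
  then obtain \<delta> where \<delta>: "0 < \<delta>"
    and uc: "\<And>x y. x \<in> {a..b} \<Longrightarrow> y \<in> {a..b} \<Longrightarrow> dist y x < \<delta> \<Longrightarrow> dist (f y) (f x) < e / 2"
    using half_gt_zero[OF e] unfolding uniformly_continuous_on_def by blast
  have "eventually (\<lambda>n. 1 \<le> n \<and> (\<forall>k < 2 ^ n. grid n (Suc k) - grid n k < \<delta>)) sequentially"
    using eventually_ge_at_top grid_mesh_eventually_small[OF \<delta>] by (rule eventually_conj)
  then show "eventually (\<lambda>n. dist (int_Gn G T n f) (LINT x:T|G. f x) < e) sequentially"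
  proof eventually_elim
    case (elim n)
    have "\<bar>int_Gn G T n f - (LINT x:T|G. f x)\<bar> \<le> e / 2"
      using elim f uc by (intro int_Gn_error_le[where \<delta> = \<delta>]) (auto simp: dist_real_def less_imp_le)
    then show ?case using e by (simp add: dist_real_def)
  qed
qed

end

lemma P_star_sba_setting:
  assumes "admissible_Theta T" "P_star T G"
  obtains a b where "sba_setting G a b T"
proof -
  obtain a b where ab: "a < b" "real_support G = {a..b}"
    and G: "sets G = sets borel" "prob_space G" "emeasure G (UNIV - T) = 0"
    using assms(2) unfolding P_star_def by blast
  have "closed T" using admissible_Theta_closed[OF assms(1)] .
  moreover have "{a..b} \<subseteq> T"
    using real_support_subset_closed[OF G(1) \<open>closed T\<close>] G(3) ab(2) by (simp add: Compl_eq_Diff_UNIV)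
  ultimately have "sba_setting G a b T"
    using ab G by (simp add: sba_setting_def sba_setting_axioms_def interval_supported_prob_def
        interval_supported_prob_axioms_def)
  then show thesis by (rule that)
qed

theorem lemma6:
  fixes T :: "real set" and G :: "real measure" and m :: nat
    and f :: "nat \<Rightarrow> real \<Rightarrow> real" and \<epsilon> :: "nat \<Rightarrow> real"
  assumes "admissible_Theta T"
    and "P_star T G"
    and "\<And>i. i \<in> {1..m} \<Longrightarrow> continuous_on T (f i) \<and> bounded (f i ` T)"
    and "\<And>i. i \<in> {1..m} \<Longrightarrow> \<epsilon> i > 0"
  shows "\<exists>n\<ge>1. \<forall>i\<in>{1..m}. \<bar>int_Gn G T n (f i) - (LINT x:T|G. f i x)\<bar> < \<epsilon> i"
proof -
  obtain a b where "sba_setting G a b T" using P_star_sba_setting[OF assms(1,2)] .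
  then interpret sba_setting G a b T .
  have "\<forall>i\<in>{1..m}. eventually (\<lambda>n. \<bar>int_Gn G T n (f i) - (LINT x:T|G. f i x)\<bar> < \<epsilon> i) sequentially"
  proof
    fix i assume i: "i \<in> {1..m}"
    have "(\<lambda>n. int_Gn G T n (f i)) \<longlonglongrightarrow> (LINT x:T|G. f i x)"
      using assms(3)[OF i] by (intro int_Gn_tendsto) auto
    then show "eventually (\<lambda>n. \<bar>int_Gn G T n (f i) - (LINT x:T|G. f i x)\<bar> < \<epsilon> i) sequentially"
      using assms(4)[OF i] by (auto simp: tendsto_iff dist_real_def)
  qed
  then have "eventually (\<lambda>n. 1 \<le> n \<and> (\<forall>i\<in>{1..m}. \<bar>int_Gn G T n (f i) - (LINT x:T|G. f i x)\<bar> < \<epsilon> i)) sequentially"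
    using eventually_ge_at_top by (intro eventually_conj eventually_ball_finite) auto
  then obtain N where "\<And>n. N \<le> n \<Longrightarrow> 1 \<le> n \<and> (\<forall>i\<in>{1..m}. \<bar>int_Gn G T n (f i) - (LINT x:T|G. f i x)\<bar> < \<epsilon> i)"
    unfolding eventually_sequentially by blast
  then show ?thesis by blast
qed

end
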